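(* In the model described in the context, it is impossible to implement an a-audit operation satisfying both completeness and strong accuracy.
   Context: Model. An asynchronous system has an arbitrary number of client processes (writers, readers, auditors) and $n$ storage objects $o_1,\dots,o_n$. Each $o_k$ is a linearisable loggable read/write register holding a block and a log $L_k$ (initially empty). Its operations are: rw-write($b$), which stores $b$; rw-read(), which returns the current block (or $\perp$) and appends $\langle p_r,\mathit{label}(b)\rangle$ to $L_k$, where $p_r$ is the reader and $\mathit{label}(b)$ identifies the value from which $b$ was derived; and rw-getLog(), which returns $L_k$. A multi-writer multi-reader register over values $\mathbb{V}$ is emulated by information dispersal. An a-write($v$) encodes $v$ into blocks $b_{v_1},\dots,b_{v_n}$, with $b_{v_k}$ sent to $o_k$. Any $\tau$ distinct blocks of $v$ suffice to recover $v$, and fewer do not; $\tau>f$. Reads are fast (one round-trip). Concurrency between operations is unlimited, and writes may be left incomplete. Faults. Writers and auditors can only crash. Faulty readers may crash or contact a subset of the objects. At most $f$ objects are faulty; a faulty object may crash, omit its block from readers, omit log records from auditors, and report records of nonexistent reads. Providing set $P_{p_r,v}$: the set of objects $o_k$ that, in the history, received a write request for $b_{v_k}$ and responded $b_{v_k}$ to a read request of $p_r$. The value $v$ is effectively read by $p_r$ iff $|P_{p_r,v}|\ge\tau$. Audit. An a-audit obtains logs from an auditing quorum $A$ of $n-f$ objects. It returns a set $E_A$ of evidences, each evidence $\mathcal{E}_{p_r,v}$ being created from at least $t\ge1$ records $\langle p_r,\mathit{label}(v)\rangle$ from distinct objects. Completeness: $|P_{p_r,v}|\ge\tau$ before the audit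 implies $\mathcal{E}_{p_r,v}\in E_A$. Strong accuracy: for every correct reader $p_r$ and every value $v$, $|P_{p_r,v}|<\tau$ before the audit implies $\mathcal{E}_{p_r,v}\notin E_A$. *)

theory Defs
  imports Main
begin

(* Events at a storage object o_k, in the order of its linearisation.
  Wr v: the object received the rw-write request for block b_{v_k} of value v.
  Rd p r: the object received an rw-read request from reader p; r says whether
  the object responded (a faulty object may omit its block; correct objects always respond). *)
datatype ('p, 'v) oev = Wr 'v | Rd 'p bool

(* Log record: reader and label of the value from which the returned block derives
  (None stands for the initial block bottom). *)
type_synonym ('p, 'v) lrec = "'p \<times> 'v option"

definition wstate :: "('p, 'v) oev list \<Rightarrow> 'v option" where
  "wstate es = foldl (\<lambda>s e. case e of Wr v \<Rightarrow> Some v | Rd _ _ \<Rightarrow> s) None es"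

fun tlog :: "'v option \<Rightarrow> ('p, 'v) oev list \<Rightarrow> ('p, 'v) lrec list" where
  "tlog s [] = []"
| "tlog s (Wr v # es) = tlog (Some v) es"
| "tlog s (Rd p r # es) = (p, s) # tlog s es"

definition nreads :: "'p \<Rightarrow> ('p, 'v) oev list \<Rightarrow> nat" where
  "nreads p es = length (filter (\<lambda>e. \<exists>r. e = Rd p r) es)"

(* A history (up to the start of the audit): events at each object, the set of faulty
  objects, the set of correct readers, and the logs the objects report to the auditor. *)
record ('p, 'v) hist =
  evs :: "nat \<Rightarrow> ('p, 'v) oev list"
  faulty :: "nat set"
  creaders :: "'p set"
  rep :: "nat \<Rightarrow> ('p, 'v) lrec list"

(* Correct objects respond to every read and report exactly their log; faulty objects may
  omit responses and report arbitrary logs (omitting records / reporting nonexistent reads).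
  A correct reader sends each of its rw-read requests to all objects. *)
definition admissible :: "nat \<Rightarrow> nat \<Rightarrow> ('p, 'v) hist \<Rightarrow> bool" where
  "admissible n f h \<longleftrightarrow>
     faulty h \<subseteq> {1..n} \<and> card (faulty h) \<le> f \<and>
     (\<forall>k\<in>{1..n}. k \<notin> faulty h \<longrightarrow>
        (\<forall>p. Rd p False \<notin> set (evs h k)) \<and> rep h k = tlog None (evs h k)) \<and>
     (\<forall>p\<in>creaders h. \<forall>k\<in>{1..n}. \<forall>j\<in>{1..n}. nreads p (evs h k) = nreads p (evs h j))"

definition providing :: "nat \<Rightarrow> ('p, 'v) hist \<Rightarrow> 'p \<Rightarrow> 'v \<Rightarrow> nat set" where
  "providing n h p v = {k \<in> {1..n}. Wr v \<in> set (evs h k) \<and>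
      (\<exists>i < length (evs h k). evs h k ! i = Rd p True \<and> wstate (take i (evs h k)) = Some v)}"

definition quorum :: "nat \<Rightarrow> nat \<Rightarrow> nat set \<Rightarrow> bool" where
  "quorum n f A \<longleftrightarrow> A \<subseteq> {1..n} \<and> card A = n - f"

definition audit_view :: "('p, 'v) hist \<Rightarrow> nat set \<Rightarrow> (nat \<times> ('p, 'v) lrec list) list \<Rightarrow> bool" where
  "audit_view h A xs \<longleftrightarrow> distinct (map fst xs) \<and> set (map fst xs) = A \<and>
     (\<forall>(k, l) \<in> set xs. l = rep h k)"

type_synonym ('p, 'v) audit = "(nat \<times> ('p, 'v) lrec list) list \<Rightarrow> ('p \<times> 'v) set"

definition evidence_based :: "nat \<Rightarrow> ('p, 'v) audit \<Rightarrow> bool" where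
  "evidence_based t aud \<longleftrightarrow> 1 \<le> t \<and>
     (\<forall>xs p v. (p, v) \<in> aud xs \<longrightarrow> t \<le> card {k. \<exists>l. (k, l) \<in> set xs \<and> (p, Some v) \<in> set l})"

definition complete :: "nat \<Rightarrow> nat \<Rightarrow> nat \<Rightarrow> ('p, 'v) audit \<Rightarrow> bool" where
  "complete n f \<tau> aud \<longleftrightarrow>
     (\<forall>h A xs p v. admissible n f h \<and> quorum n f A \<and> audit_view h A xs \<and>
        \<tau> \<le> card (providing n h p v) \<longrightarrow> (p, v) \<in> aud xs)"

definition strongly_accurate :: "nat \<Rightarrow> nat \<Rightarrow> nat \<Rightarrow> ('p, 'v) audit \<Rightarrow> bool" where
  "strongly_accurate n f \<tau> aud \<longleftrightarrow>
     (\<forall>h A xs p v. admissible n f h \<and> quorum n f A \<and> audit_view h A xs \<and>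
        p \<in> creaders h \<and> card (providing n h p v) < \<tau> \<longrightarrow> (p, v) \<notin> aud xs)"

end

theory Submission
  imports Defs
begin

(* Let p write v to the objects o_1..o_\<tau> and then read from all objects. If every object is
  correct, p effectively reads v. If instead o_1 is faulty, omits its block from p, but still
  reports the log of a correct object, then fewer than \<tau> objects provide v to p, while the
  auditor receives exactly the same logs from every quorum. An audit cannot return different
  answers on identical inputs, so it violates completeness in the first history or strong
  accuracy in the second. *)

lemma audit_view_common:
  assumes "finite A" and "\<And>k. k \<in> A \<Longrightarrow> rep h1 k = rep h2 k"
  shows "\<exists>xs. audit_view h1 A xs \<and> audit_view h2 A xs"
proof -
  define xs where "xs = map (\<lambda>k. (k, rep h1 k)) (sorted_list_of_set A)"
  have "audit_view h1 A xs" and "audit_view h2 A xs"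
    using assms by (auto simp: audit_view_def xs_def comp_def)
  then show ?thesis by blast
qed

lemma quorum_initial_segment: "f \<le> n \<Longrightarrow> quorum n f {1..n - f}"
  by (auto simp: quorum_def)

lemma indistinguishable_not_complete_and_strongly_accurate:
  fixes h1 h2 :: "('p, 'v) hist" and aud :: "('p, 'v) audit"
  assumes "admissible n f h1" and "admissible n f h2"
    and "quorum n f A" and "\<And>k. k \<in> A \<Longrightarrow> rep h1 k = rep h2 k"
    and "\<tau> \<le> card (providing n h1 p v)"
    and "p \<in> creaders h2" and "card (providing n h2 p v) < \<tau>"
  shows "\<not> (complete n f \<tau> aud \<and> strongly_accurate n f \<tau> aud)"
proof -
  have "finite A" using \<open>quorum n f A\<close> by (auto simp: quorum_def intro: finite_subset)
  then obtain xs where "audit_view h1 A xs" and "audit_view h2 A xs"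
    using audit_view_common assms(4) by blast
  moreover note assms
  ultimately have "complete n f \<tau> aud \<Longrightarrow> (p, v) \<in> aud xs"
    and "strongly_accurate n f \<tau> aud \<Longrightarrow> (p, v) \<notin> aud xs"
    unfolding complete_def strongly_accurate_def by blast+
  then show ?thesis by blast
qed

definition dispersal_run :: "nat \<Rightarrow> 'p \<Rightarrow> 'v \<Rightarrow> nat \<Rightarrow> ('p, 'v) oev list" where
  "dispersal_run \<tau> p v k = (if k \<le> \<tau> then [Wr v, Rd p True] else [Rd p True])"

definition honest_hist :: "nat \<Rightarrow> 'p \<Rightarrow> 'v \<Rightarrow> ('p, 'v) hist" where
  "honest_hist \<tau> p v = \<lparr>evs = dispersal_run \<tau> p v, faulty = {}, creaders = {p},
     rep = \<lambda>k. tlog None (dispersal_run \<tau> p v k)\<rparr>"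

definition omitting_hist :: "nat \<Rightarrow> 'p \<Rightarrow> 'v \<Rightarrow> ('p, 'v) hist" where
  "omitting_hist \<tau> p v = \<lparr>evs = (dispersal_run \<tau> p v)(1 := [Wr v, Rd p False]),
     faulty = {1}, creaders = {p}, rep = \<lambda>k. tlog None (dispersal_run \<tau> p v k)\<rparr>"

lemma admissible_honest_hist: "admissible n f (honest_hist \<tau> p v)"
  by (auto simp: admissible_def honest_hist_def dispersal_run_def nreads_def)

lemma admissible_omitting_hist:
  assumes "1 \<le> f" and "1 \<le> n"
  shows "admissible n f (omitting_hist \<tau> p v)"
  using assms by (auto simp: admissible_def omitting_hist_def dispersal_run_def nreads_def)

lemma providing_honest_hist:
  assumes "\<tau> \<le> n"
  shows "providing n (honest_hist \<tau> p v) p v = {1..\<tau>}"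
proof -
  have "wstate (take 1 [Wr v, Rd p True]) = Some v" by (simp add: wstate_def)
  then show ?thesis using assms
    by (force simp: providing_def honest_hist_def dispersal_run_def split: if_splits)
qed

lemma providing_omitting_hist_subset:
  fixes p :: 'p and v :: 'v
  shows "providing n (omitting_hist \<tau> p v) p v \<subseteq> {2..\<tau>}"
proof
  fix k assume k: "k \<in> providing n (omitting_hist \<tau> p v) p v"
  have "Rd p True \<notin> set [Wr v, Rd p False :: ('p, 'v) oev]" by simp
  then have "k \<noteq> 1" using k by (auto simp: providing_def omitting_hist_def dest: nth_mem)
  moreover have "Wr v \<notin> set [Rd p True :: ('p, 'v) oev]" by simp
  ultimately show "k \<in> {2..\<tau>}" using k
    by (auto simp: providing_def omitting_hist_def dispersal_run_def split: if_splits)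
qed

lemma card_providing_omitting_hist:
  assumes "1 \<le> \<tau>"
  shows "card (providing n (omitting_hist \<tau> p v) p v) < \<tau>"
proof -
  have "card (providing n (omitting_hist \<tau> p v) p v) \<le> card {2..\<tau>}"
    using providing_omitting_hist_subset by (rule card_mono[rotated]) simp
  then show ?thesis using assms by simp
qed

theorem theorem2:
  fixes n f \<tau> :: nat
  assumes "1 \<le> f" and "f < \<tau>" and "\<tau> \<le> n"
  shows "\<not> (\<exists>(aud :: ('p, 'v) audit) t.
            evidence_based t aud \<and> complete n f \<tau> aud \<and> strongly_accurate n f \<tau> aud)"
proof -
  fix p :: 'p and v :: 'v
  have "\<not> (complete n f \<tau> aud \<and> strongly_accurate n f \<tau> aud)" for aud :: "('p, 'v) audit"
  proof (rule indistinguishable_not_complete_and_strongly_accurate)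
    show "admissible n f (honest_hist \<tau> p v)" by (rule admissible_honest_hist)
    show "admissible n f (omitting_hist \<tau> p v)"
      using assms by (intro admissible_omitting_hist) auto
    show "quorum n f {1..n - f}" using assms by (intro quorum_initial_segment) simp
    show "rep (honest_hist \<tau> p v) k = rep (omitting_hist \<tau> p v) k" for k
      by (simp add: honest_hist_def omitting_hist_def)
    show "\<tau> \<le> card (providing n (honest_hist \<tau> p v) p v)"
      using assms by (simp add: providing_honest_hist)
    show "p \<in> creaders (omitting_hist \<tau> p v)" by (simp add: omitting_hist_def)
    show "card (providing n (omitting_hist \<tau> p v) p v) < \<tau>"
      using assms by (intro card_providing_omitting_hist) simp
  qed
  then show ?thesis by blast
qed

end
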